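(* Let $B=\sum_{i=1}^k w_i\,\mathcal N(\mu_i,1-\delta)$ be a Gaussian mixture on $\mathbb R$ with weights $w_i>0$, $\sum_i w_i=1$, centers $\mu_i\in\mathbb R$ and $\delta\in(0,1]$. Let $m'\ge1$ be an integer and $\lambda\ge0$, and suppose that every polynomial $p:\mathbb R\to\mathbb R$ of degree at most $m'$ with $\mathbf E_{x\sim\mathcal N(0,1)}[p(x)^2]=1$ satisfies $\big|\mathbf E_{x\sim B}[p(x)]-\mathbf E_{x\sim\mathcal N(0,1)}[p(x)]\big|\le\lambda$. Let $A$ be the discrete distribution that assigns mass $w_i$ to the point $\mu_i/\sqrt\delta$ for each $i\in[k]$. Then every polynomial $p$ of degree at most $m'$ with $\mathbf E_{x\sim\mathcal N(0,1)}[p(x)^2]=1$ satisfies $$\big|\mathbf E_{x\sim A}[p(x)]-\mathbf E_{x\sim\mathcal N(0,1)}[p(x)]\big|\le \sqrt{m'}\,\lambda\,\delta^{-m'/2}.$$ *)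

theory Defs
  imports "HOL-Probability.Probability" "HOL-Computational_Algebra.Polynomial"
begin

definition gauss_exp :: "real \<Rightarrow> real \<Rightarrow> (real \<Rightarrow> real) \<Rightarrow> real" where
  "gauss_exp m v f =
     (if v = 0 then f m else (LINT x|lborel. normal_density m (sqrt v) x * f x))"

definition std_gauss_exp :: "(real \<Rightarrow> real) \<Rightarrow> real" where
  "std_gauss_exp f = gauss_exp 0 1 f"

definition mixture_exp :: "nat \<Rightarrow> (nat \<Rightarrow> real) \<Rightarrow> (nat \<Rightarrow> real) \<Rightarrow> real \<Rightarrow> (real \<Rightarrow> real) \<Rightarrow> real" where
  "mixture_exp k w mu v f = (\<Sum>i<k. w i * gauss_exp (mu i) v f)"

definition discrete_exp :: "nat \<Rightarrow> (nat \<Rightarrow> real) \<Rightarrow> (nat \<Rightarrow> real) \<Rightarrow> (real \<Rightarrow> real) \<Rightarrow> real" where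
  "discrete_exp k w a f = (\<Sum>i<k. w i * f (a i))"

end

theory Submission
  imports Defs
begin

text \<open>Write \<open>p = \<Sum>\<^sub>j a\<^sub>j He\<^sub>j\<close> in the probabilists' Hermite polynomials. If \<open>\<rho>\<^sup>2 + \<sigma>\<^sup>2 = 1\<close> and
  \<open>Z\<close> is standard Gaussian, then \<open>E He\<^sub>j(\<mu> + \<sigma> Z) = \<rho>\<^sup>j He\<^sub>j(\<mu> / \<rho>)\<close>; with \<open>\<rho> = sqrt \<delta>\<close> the polynomial
  \<open>r = \<Sum>\<^sub>j a\<^sub>j \<delta>^(-j/2) He\<^sub>j\<close> therefore has the same mean under \<open>B\<close> as \<open>p\<close> has under \<open>A\<close>, and
  the same Gaussian mean \<open>a\<^sub>0\<close>. By orthogonality its Gaussian second moment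
  \<open>\<Sum>\<^sub>j j! a\<^sub>j\<^sup>2 \<delta>^(-j)\<close> lies between \<open>1\<close> and \<open>\<delta>^(-m')\<close>, so the hypothesis applied to \<open>r\<close>
  rescaled to unit second moment gives the bound \<open>\<lambda> \<delta>^(-m'/2)\<close>; the factor \<open>sqrt m' \<ge> 1\<close> is slack.\<close>

definition gauss_moment :: "nat \<Rightarrow> real" where
  "gauss_moment n = (if even n then fact n / (2 ^ (n div 2) * fact (n div 2)) else 0)"

lemma gauss_moment_Suc_Suc: "gauss_moment (Suc (Suc n)) = real (Suc n) * gauss_moment n"
proof (cases "even n")
  case True
  then obtain k where n: "n = 2 * k" by blast
  have "fact (2 * k + 2) = (2 * real (k + 1)) * (real (2 * k + 1) * fact (2 * k) :: real)"
    by (simp add: algebra_simps)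
  moreover have "2 ^ (k + 1) * fact (k + 1) = (2 * real (k + 1)) * (2 ^ k * fact k :: real)"
    by (simp add: algebra_simps)
  ultimately have "fact (2 * k + 2) / (2 ^ (k + 1) * fact (k + 1))
      = real (2 * k + 1) * (fact (2 * k) / (2 ^ k * fact k) :: real)"
    by (simp only: mult_divide_mult_cancel_left_if times_divide_eq_right) simp
  then show ?thesis by (simp add: gauss_moment_def n)
next
  case False
  then show ?thesis by (simp add: gauss_moment_def)
qed

lemma has_bochner_integral_gauss_moment:
  "has_bochner_integral lborel (\<lambda>x. std_normal_density x * x ^ n) (gauss_moment n)"
proof (cases "even n")
  case True
  then obtain k where "n = 2 * k" by blast
  then show ?thesis using std_normal_moment_even[of k] by (simp add: gauss_moment_def)
next
  case False
  then obtain k where "n = 2 * k + 1" by (blast elim: oddE)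
  then show ?thesis using std_normal_moment_odd[of k] by (simp add: gauss_moment_def)
qed

text \<open>The standard Gaussian expectation of a polynomial, computed from the moments; this makes
  it linear without any integrability side conditions.\<close>

definition gauss_mean :: "real poly \<Rightarrow> real" where
  "gauss_mean p = (\<Sum>n\<le>degree p. coeff p n * gauss_moment n)"

lemma gauss_mean_eq_sum:
  assumes "degree p \<le> N"
  shows "gauss_mean p = (\<Sum>n\<le>N. coeff p n * gauss_moment n)"
  unfolding gauss_mean_def
  by (rule sum.mono_neutral_left) (use assms in \<open>auto simp: coeff_eq_0\<close>)

lemma gauss_mean_add: "gauss_mean (p + q) = gauss_mean p + gauss_mean q"
proof -
  define N where "N = max (degree p) (degree q)"
  have "degree (p + q) \<le> N"
    unfolding N_def by (rule degree_add_le) auto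
  then show ?thesis
    using gauss_mean_eq_sum[of p N] gauss_mean_eq_sum[of q N] gauss_mean_eq_sum[of "p + q" N]
    by (simp add: N_def distrib_right sum.distrib)
qed

lemma gauss_mean_smult: "gauss_mean (smult c p) = c * gauss_mean p"
  using gauss_mean_eq_sum[of "smult c p" "degree p"]
  by (simp add: gauss_mean_def sum_distrib_left mult.assoc)

lemma gauss_mean_diff: "gauss_mean (p - q) = gauss_mean p - gauss_mean q"
  using gauss_mean_add[of p "-q"] gauss_mean_smult[of "-1" q] by simp

lemma gauss_mean_sum: "gauss_mean (sum f A) = (\<Sum>i\<in>A. gauss_mean (f i))"
proof (induction A rule: infinite_finite_induct)
  case (insert x F)
  then show ?case by (simp add: gauss_mean_add)
qed (simp_all add: gauss_mean_def)

lemma gauss_mean_const [simp]: "gauss_mean [:c:] = c"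
  by (simp add: gauss_mean_def gauss_moment_def)

lemma gauss_mean_0 [simp]: "gauss_mean 0 = 0"
  by (simp add: gauss_mean_def)

lemma gauss_mean_1 [simp]: "gauss_mean 1 = 1"
  by (simp add: gauss_mean_def gauss_moment_def)

text \<open>Stein's identity \<open>E[Z q(Z)] = E[q'(Z)]\<close>; on monomials it is the moment recursion.\<close>

lemma gauss_mean_pCons_0: "gauss_mean (pCons 0 q) = gauss_mean (pderiv q)"
proof -
  define M where "M = degree q"
  have "gauss_mean (pCons 0 q) = (\<Sum>n\<le>Suc M. coeff (pCons 0 q) n * gauss_moment n)"
    by (rule gauss_mean_eq_sum) (simp add: M_def degree_pCons_le)
  also have "\<dots> = (\<Sum>n\<le>M. coeff q n * gauss_moment (Suc n))"
    by (subst sum.atMost_Suc_shift) simp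
  also have "\<dots> = (\<Sum>n\<le>Suc M. coeff q n * gauss_moment (Suc n))"
    by (simp add: M_def coeff_eq_0)
  also have "\<dots> = (\<Sum>n\<le>M. coeff q (Suc n) * gauss_moment (Suc (Suc n)))"
    by (subst sum.atMost_Suc_shift) (simp add: gauss_moment_def)
  also have "\<dots> = (\<Sum>n\<le>M. coeff (pderiv q) n * gauss_moment n)"
    by (simp add: coeff_pderiv gauss_moment_Suc_Suc mult_ac)
  also have "\<dots> = gauss_mean (pderiv q)"
    by (rule gauss_mean_eq_sum[symmetric]) (simp add: M_def degree_pderiv)
  finally show ?thesis .
qed

lemma has_bochner_integral_gauss_mean:
  "has_bochner_integral lborel (\<lambda>x. std_normal_density x * poly p x) (gauss_mean p)"
proof -
  have "has_bochner_integral lborel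
          (\<lambda>x. \<Sum>n\<le>degree p. coeff p n * (std_normal_density x * x ^ n)) (gauss_mean p)"
    unfolding gauss_mean_def
    by (intro has_bochner_integral_sum has_bochner_integral_mult_right
          has_bochner_integral_gauss_moment)
  then show ?thesis
    by (simp add: poly_altdef sum_distrib_left mult_ac)
qed

lemma gauss_exp_poly:
  assumes "v \<ge> 0"
  shows "gauss_exp m v (poly p) = gauss_mean (p \<circ>\<^sub>p [:m, sqrt v:])"
proof (cases "v = 0")
  case True
  then show ?thesis by (simp add: gauss_exp_def pcompose_pCons_0)
next
  case False
  define s where "s = sqrt v"
  have s: "s > 0" using assms False by (simp add: s_def)
  have density: "s * normal_density m s (m + s * z) = std_normal_density z" for z
    using s by (simp add: normal_density_def real_sqrt_mult power2_eq_square field_simps)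
  have "gauss_exp m v (poly p) = (LINT x|lborel. normal_density m s x * poly p x)"
    using False by (simp add: gauss_exp_def s_def)
  also have "\<dots> = \<bar>s\<bar> *\<^sub>R (LINT z|lborel. normal_density m s (m + s * z) * poly p (m + s * z))"
    by (rule lborel_integral_real_affine) (use s in simp)
  also have "\<dots> = (LINT z|lborel. std_normal_density z * poly (p \<circ>\<^sub>p [:m, s:]) z)"
    using s by (simp add: density[symmetric] poly_pcompose mult.commute mult.left_commute)
  also have "\<dots> = gauss_mean (p \<circ>\<^sub>p [:m, s:])"
    by (rule has_bochner_integral_integral_eq[OF has_bochner_integral_gauss_mean])
  finally show ?thesis by (simp add: s_def)
qed

lemma std_gauss_exp_poly: "std_gauss_exp (poly p) = gauss_mean p"
  unfolding std_gauss_exp_def by (simp add: gauss_exp_poly)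

fun hermite :: "nat \<Rightarrow> real poly" where
  "hermite 0 = 1"
| "hermite (Suc 0) = [:0, 1:]"
| "hermite (Suc (Suc n)) = [:0, 1:] * hermite (Suc n) - smult (real (Suc n)) (hermite n)"

lemma degree_hermite [simp]: "degree (hermite n) = n"
  and coeff_hermite_self [simp]: "coeff (hermite n) n = 1"
proof -
  have "degree (hermite n) = n \<and> coeff (hermite n) n = 1"
  proof (induction n rule: hermite.induct)
    case (3 n)
    define A where "A = [:0, 1:] * hermite (Suc n)"
    define B where "B = smult (real (Suc n)) (hermite n)"
    have "hermite (Suc n) \<noteq> 0" using 3 by auto
    then have A: "degree A = Suc (Suc n)" "coeff A (Suc (Suc n)) = 1"
      using 3 by (simp_all add: A_def degree_mult_eq)
    have B: "degree B < Suc (Suc n)"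
      using degree_smult_le[of "real (Suc n)" "hermite n"] 3 by (simp add: B_def)
    have "hermite (Suc (Suc n)) = A + - B" by (simp add: A_def B_def)
    then show ?case
      using A B degree_add_eq_left[of "- B" A] by (simp add: coeff_eq_0)
  qed auto
  then show "degree (hermite n) = n" "coeff (hermite n) n = 1" by auto
qed

declare hermite.simps(3) [simp del]

lemma pderiv_hermite_Suc: "pderiv (hermite (Suc n)) = smult (real (Suc n)) (hermite n)"
proof (induction n rule: hermite.induct)
  case (3 n)
  have "pderiv (hermite (Suc (Suc (Suc n))))
      = hermite (Suc (Suc n)) + smult (real (Suc (Suc n)))
          ([:0, 1:] * hermite (Suc n) - smult (real (Suc n)) (hermite n))"
    using 3 by (simp add: hermite.simps(3)[of "Suc n"] pderiv_diff pderiv_mult pderiv_smult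
        pderiv_pCons smult_diff_right algebra_simps)
  also have "\<dots> = hermite (Suc (Suc n)) + smult (real (Suc (Suc n))) (hermite (Suc (Suc n)))"
    by (simp only: hermite.simps(3)[of n, symmetric])
  also have "\<dots> = smult (real (Suc (Suc (Suc n)))) (hermite (Suc (Suc n)))"
    by (metis add.commute of_nat_Suc smult_1_left smult_add_left)
  finally show ?case .
qed (auto simp: hermite.simps(3) pderiv_pCons pderiv_mult)

lemma funpow_pderiv_degree_le:
  "degree p \<le> n \<Longrightarrow> (pderiv ^^ n) p = [:fact n * coeff p n:]"
proof (induction n arbitrary: p)
  case 0
  then show ?case by (simp add: degree_0_id)
next
  case (Suc n)
  have "(pderiv ^^ n) (pderiv p) = [:fact n * coeff (pderiv p) n:]"
    by (rule Suc.IH) (use Suc.prems in \<open>simp add: degree_pderiv\<close>)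
  then show ?case
    by (simp add: funpow_Suc_right coeff_pderiv mult_ac del: funpow.simps)
qed

text \<open>Iterating Stein's identity along the Hermite recursion.\<close>

lemma gauss_mean_hermite_mult: "gauss_mean (hermite n * q) = gauss_mean ((pderiv ^^ n) q)"
proof (induction n arbitrary: q rule: hermite.induct)
  case (2 q)
  show ?case using gauss_mean_pCons_0[of q] by simp
next
  case (3 n q)
  have "hermite (Suc (Suc n)) * q
      = pCons 0 (hermite (Suc n) * q) - smult (real (Suc n)) (hermite n * q)"
    by (simp add: hermite.simps(3) algebra_simps)
  moreover have "pderiv (hermite (Suc n) * q)
      = hermite (Suc n) * pderiv q + smult (real (Suc n)) (hermite n * q)"
    by (simp add: pderiv_mult pderiv_hermite_Suc algebra_simps)
  ultimately have "gauss_mean (hermite (Suc (Suc n)) * q) = gauss_mean (hermite (Suc n) * pderiv q)"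
    by (simp add: gauss_mean_diff gauss_mean_smult gauss_mean_add gauss_mean_pCons_0)
  also have "\<dots> = gauss_mean ((pderiv ^^ Suc n) (pderiv q))" by (rule 3)
  finally show ?case by (simp add: funpow_Suc_right del: funpow.simps)
qed simp

lemma gauss_mean_hermite_hermite:
  "gauss_mean (hermite i * hermite j) = (if i = j then fact i else 0)"
proof -
  have ordered: "gauss_mean (hermite j * hermite i) = (if i = j then fact j else 0)"
    if "i \<le> j" for i j
    using that by (auto simp: gauss_mean_hermite_mult funpow_pderiv_degree_le coeff_eq_0)
  show ?thesis
  proof (cases "i \<le> j")
    case True
    then show ?thesis using ordered[of i j] by (simp add: mult.commute)
  next
    case False
    then show ?thesis using ordered[of j i] by simp
  qed
qed

text \<open>Here \<open>gauss_mean (q \<circ>\<^sub>p [:c, \<sigma>:])\<close> is \<open>E q(c + \<sigma> Z)\<close>. By Stein's identity both sides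
  satisfy the three-term recursion of the Hermite polynomials.\<close>

lemma gauss_mean_hermite_pcompose:
  assumes "\<rho>\<^sup>2 + \<sigma>\<^sup>2 = 1"
  shows "gauss_mean (hermite n \<circ>\<^sub>p [:\<rho> * x, \<sigma>:]) = \<rho> ^ n * poly (hermite n) x"
proof (induction n rule: hermite.induct)
  case 1
  then show ?case by (simp add: pcompose_1)
next
  case 2
  have "gauss_mean [:\<rho> * x, \<sigma>:] = \<rho> * x"
    using gauss_mean_pCons_0[of "[:\<sigma>:]"] gauss_mean_add[of "[:\<rho> * x:]" "pCons 0 [:\<sigma>:]"]
    by (simp add: pderiv_pCons)
  then show ?case by (simp add: pcompose_pCons)
next
  case (3 n)
  define g where "g k = hermite k \<circ>\<^sub>p [:\<rho> * x, \<sigma>:]" for k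
  have g_rec: "g (Suc (Suc n))
      = smult (\<rho> * x) (g (Suc n)) + pCons 0 (smult \<sigma> (g (Suc n))) - smult (real (Suc n)) (g n)"
    by (simp add: hermite.simps(3) g_def pcompose_diff pcompose_mult pcompose_smult pcompose_pCons)
  have "pderiv (g (Suc n)) = smult (\<sigma> * real (Suc n)) (g n)"
    by (simp add: g_def pderiv_pcompose pderiv_hermite_Suc pderiv_pCons pcompose_smult)
  then have "gauss_mean (g (Suc (Suc n)))
      = \<rho> * x * gauss_mean (g (Suc n)) - (1 - \<sigma>\<^sup>2) * real (Suc n) * gauss_mean (g n)"
    unfolding g_rec
    by (simp add: gauss_mean_diff gauss_mean_add gauss_mean_smult gauss_mean_pCons_0
        pderiv_smult algebra_simps power2_eq_square)
  also have "1 - \<sigma>\<^sup>2 = \<rho>\<^sup>2" using assms by simp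
  also have "\<rho> * x * gauss_mean (g (Suc n)) - \<rho>\<^sup>2 * real (Suc n) * gauss_mean (g n)
      = \<rho> ^ Suc (Suc n) * poly (hermite (Suc (Suc n))) x"
    using 3 by (simp add: g_def hermite.simps(3) algebra_simps power2_eq_square)
  finally show ?case by (simp add: g_def)
qed

lemma gauss_mean_hermite: "gauss_mean (hermite n) = (if n = 0 then 1 else 0)"
  using gauss_mean_hermite_pcompose[of 0 1 n 0] by simp

definition hermite_sum :: "(nat \<Rightarrow> real) \<Rightarrow> nat \<Rightarrow> real poly" where
  "hermite_sum a m = (\<Sum>j\<le>m. smult (a j) (hermite j))"

lemma degree_hermite_sum: "degree (hermite_sum a m) \<le> m"
  unfolding hermite_sum_def
  by (rule degree_sum_le) (auto intro: order_trans[OF degree_smult_le])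

lemma hermite_expansion: "degree p \<le> m \<Longrightarrow> \<exists>a. p = hermite_sum a m"
proof (induction m arbitrary: p)
  case 0
  then have "p = hermite_sum (\<lambda>_. coeff p 0) 0"
    by (simp add: hermite_sum_def degree_0_id)
  then show ?case by blast
next
  case (Suc m)
  define c where "c = coeff p (Suc m)"
  have "degree (p - smult c (hermite (Suc m))) \<le> m"
  proof (intro degree_le allI impI)
    fix i
    assume "m < i"
    then consider "i = Suc m" | "Suc m < i" by linarith
    then show "coeff (p - smult c (hermite (Suc m))) i = 0"
      by cases (use Suc.prems in \<open>auto simp: c_def coeff_eq_0\<close>)
  qed
  then obtain a where a: "p - smult c (hermite (Suc m)) = hermite_sum a m"
    using Suc.IH by blast
  have "hermite_sum (a(Suc m := c)) (Suc m) = hermite_sum a m + smult c (hermite (Suc m))"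
    unfolding hermite_sum_def by (simp add: add.commute)
  then have "p = hermite_sum (a(Suc m := c)) (Suc m)"
    using a by (simp add: algebra_simps)
  then show ?case by blast
qed

lemma gauss_mean_hermite_sum: "gauss_mean (hermite_sum a m) = a 0"
  by (simp add: hermite_sum_def gauss_mean_sum gauss_mean_smult gauss_mean_hermite
      if_distrib sum.delta' cong: if_cong)

lemma gauss_mean_hermite_sum_sq:
  "gauss_mean (hermite_sum a m * hermite_sum a m) = (\<Sum>j\<le>m. (a j)\<^sup>2 * fact j)"
proof -
  have "hermite_sum a m * hermite_sum a m
      = (\<Sum>i\<le>m. \<Sum>j\<le>m. smult (a i * a j) (hermite i * hermite j))"
    by (simp add: hermite_sum_def sum_product mult_smult_left mult_smult_right mult.commute)
  then show ?thesis
    by (simp add: gauss_mean_sum gauss_mean_smult gauss_mean_hermite_hermite if_distrib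
        sum.delta power2_eq_square cong: if_cong)
qed

lemma gauss_mean_hermite_sum_pcompose:
  assumes "\<rho> > 0" "\<rho>\<^sup>2 + \<sigma>\<^sup>2 = 1"
  shows "gauss_mean (hermite_sum (\<lambda>j. a j / \<rho> ^ j) m \<circ>\<^sub>p [:\<mu>, \<sigma>:]) = poly (hermite_sum a m) (\<mu> / \<rho>)"
proof -
  have "gauss_mean (hermite j \<circ>\<^sub>p [:\<mu>, \<sigma>:]) = \<rho> ^ j * poly (hermite j) (\<mu> / \<rho>)" for j
    using gauss_mean_hermite_pcompose[OF assms(2), of j "\<mu> / \<rho>"] assms(1) by simp
  then show ?thesis
    using assms(1)
    by (simp add: hermite_sum_def pcompose_sum pcompose_smult gauss_mean_sum gauss_mean_smult poly_sum)
qed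

lemma std_gauss_exp_hermite_sum: "std_gauss_exp (poly (hermite_sum a m)) = a 0"
  by (simp add: std_gauss_exp_poly gauss_mean_hermite_sum)

lemma std_gauss_exp_hermite_sum_sq:
  "std_gauss_exp (\<lambda>x. (poly (hermite_sum a m) x)\<^sup>2) = (\<Sum>j\<le>m. (a j)\<^sup>2 * fact j)"
proof -
  have "(\<lambda>x. (poly (hermite_sum a m) x)\<^sup>2) = poly (hermite_sum a m * hermite_sum a m)"
    by (auto simp: power2_eq_square)
  then show ?thesis by (simp add: std_gauss_exp_poly gauss_mean_hermite_sum_sq)
qed

lemma discrete_exp_eq_mixture_exp_hermite_sum:
  assumes "0 < \<delta>" "\<delta> \<le> 1"
  shows "discrete_exp k w (\<lambda>i. mu i / sqrt \<delta>) (poly (hermite_sum a m))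
       = mixture_exp k w mu (1 - \<delta>) (poly (hermite_sum (\<lambda>j. a j / sqrt \<delta> ^ j) m))"
proof -
  have "(sqrt \<delta>)\<^sup>2 + (sqrt (1 - \<delta>))\<^sup>2 = 1" using assms by simp
  then show ?thesis
    using assms
    by (simp add: discrete_exp_def mixture_exp_def gauss_exp_poly gauss_mean_hermite_sum_pcompose)
qed

lemma gauss_exp_cmult: "gauss_exp m v (\<lambda>x. c * f x) = c * gauss_exp m v f"
  by (simp add: gauss_exp_def mult.left_commute)

lemma mixture_deviation_le:
  assumes unit: "\<And>p :: real poly. degree p \<le> d \<Longrightarrow> std_gauss_exp (\<lambda>x. (poly p x)\<^sup>2) = 1 \<Longrightarrow>
      \<bar>mixture_exp k w mu v (poly p) - std_gauss_exp (poly p)\<bar> \<le> lam"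
    and "degree q \<le> d" and pos: "std_gauss_exp (\<lambda>x. (poly q x)\<^sup>2) > 0"
  shows "\<bar>mixture_exp k w mu v (poly q) - std_gauss_exp (poly q)\<bar>
           \<le> lam * sqrt (std_gauss_exp (\<lambda>x. (poly q x)\<^sup>2))"
proof -
  define N where "N = sqrt (std_gauss_exp (\<lambda>x. (poly q x)\<^sup>2))"
  have N: "N > 0" "N\<^sup>2 = std_gauss_exp (\<lambda>x. (poly q x)\<^sup>2)" using pos by (simp_all add: N_def)
  define q' where "q' = smult (1 / N) q"
  have q': "poly q' = (\<lambda>x. 1 / N * poly q x)" by (auto simp: q'_def)
  have "degree q' \<le> d" using assms(2) by (simp add: q'_def)
  moreover have "std_gauss_exp (\<lambda>x. (poly q' x)\<^sup>2) = 1"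
    using N pos gauss_exp_cmult[of 0 1 "1 / N\<^sup>2" "\<lambda>x. (poly q x)\<^sup>2"]
    by (simp add: q' std_gauss_exp_def power_mult_distrib power_divide)
  ultimately have "\<bar>mixture_exp k w mu v (poly q') - std_gauss_exp (poly q')\<bar> \<le> lam"
    by (rule unit)
  moreover have "gauss_exp m v' (poly q') = gauss_exp m v' (poly q) / N" for m v'
    unfolding q' by (simp only: gauss_exp_cmult) simp
  then have "mixture_exp k w mu v (poly q') - std_gauss_exp (poly q')
      = (mixture_exp k w mu v (poly q) - std_gauss_exp (poly q)) / N"
    by (simp add: mixture_exp_def std_gauss_exp_def sum_divide_distrib diff_divide_distrib)
  ultimately show ?thesis
    using N by (simp add: N_def abs_div_pos divide_le_eq mult.commute)
qed

lemma sum_divide_power_bounds: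
  fixes \<delta> :: real
  assumes "0 < \<delta>" "\<delta> \<le> 1" and "\<And>j. j \<le> m \<Longrightarrow> f j \<ge> 0"
  shows "(\<Sum>j\<le>m. f j) \<le> (\<Sum>j\<le>m. f j / \<delta> ^ j)"
    and "(\<Sum>j\<le>m. f j / \<delta> ^ j) \<le> (\<Sum>j\<le>m. f j) / \<delta> ^ m"
proof -
  show "(\<Sum>j\<le>m. f j) \<le> (\<Sum>j\<le>m. f j / \<delta> ^ j)"
    using assms by (intro sum_mono) (simp add: le_divide_eq mult_left_le power_le_one)
  have "f j / \<delta> ^ j \<le> f j / \<delta> ^ m" if "j \<le> m" for j
    using assms that by (intro divide_left_mono) (simp_all add: power_decreasing)
  then have "(\<Sum>j\<le>m. f j / \<delta> ^ j) \<le> (\<Sum>j\<le>m. f j / \<delta> ^ m)"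
    by (intro sum_mono) simp
  then show "(\<Sum>j\<le>m. f j / \<delta> ^ j) \<le> (\<Sum>j\<le>m. f j) / \<delta> ^ m"
    by (simp add: sum_divide_distrib)
qed

lemma std_gauss_exp_hermite_sum_rescale_sq:
  fixes a :: "nat \<Rightarrow> real"
  assumes "0 < \<delta>" "\<delta> \<le> 1"
  defines "b \<equiv> \<lambda>j. a j / sqrt \<delta> ^ j"
  shows "std_gauss_exp (\<lambda>x. (poly (hermite_sum a m) x)\<^sup>2)
           \<le> std_gauss_exp (\<lambda>x. (poly (hermite_sum b m) x)\<^sup>2)"
    and "std_gauss_exp (\<lambda>x. (poly (hermite_sum b m) x)\<^sup>2)
           \<le> std_gauss_exp (\<lambda>x. (poly (hermite_sum a m) x)\<^sup>2) / \<delta> ^ m"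
proof -
  have "(b j)\<^sup>2 * fact j = (a j)\<^sup>2 * fact j / \<delta> ^ j" for j
    using assms by (simp add: power_divide power_mult[of _ 2] mult.commute[of j] flip: power_mult)
  then show "std_gauss_exp (\<lambda>x. (poly (hermite_sum a m) x)\<^sup>2)
           \<le> std_gauss_exp (\<lambda>x. (poly (hermite_sum b m) x)\<^sup>2)"
    and "std_gauss_exp (\<lambda>x. (poly (hermite_sum b m) x)\<^sup>2)
           \<le> std_gauss_exp (\<lambda>x. (poly (hermite_sum a m) x)\<^sup>2) / \<delta> ^ m"
    using sum_divide_power_bounds[OF assms(1,2), of m "\<lambda>j. (a j)\<^sup>2 * fact j"]
    by (simp_all add: std_gauss_exp_hermite_sum_sq)
qed

lemma sqrt_inverse_power_eq_powr:
  "0 < (x :: real) \<Longrightarrow> sqrt (1 / x ^ n) = x powr (- (real n / 2))"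
  by (simp add: powr_half_sqrt[symmetric] powr_realpow[symmetric] powr_minus_divide[symmetric]
      powr_powr)

theorem mainTheorem12:
  fixes k :: nat and w mu :: "nat \<Rightarrow> real" and \<delta> lam :: real and m' :: nat
  assumes w_pos: "\<And>i. i < k \<Longrightarrow> w i > 0"
    and w_sum: "(\<Sum>i<k. w i) = 1"
    and delta: "0 < \<delta>" "\<delta> \<le> 1"
    and m': "m' \<ge> 1"
    and lam: "lam \<ge> 0"
    and hyp: "\<And>p :: real poly. degree p \<le> m' \<Longrightarrow> std_gauss_exp (\<lambda>x. (poly p x)\<^sup>2) = 1 \<Longrightarrow>
               \<bar>mixture_exp k w mu (1 - \<delta>) (poly p) - std_gauss_exp (poly p)\<bar> \<le> lam"
  shows "\<And>p :: real poly. degree p \<le> m' \<Longrightarrow> std_gauss_exp (\<lambda>x. (poly p x)\<^sup>2) = 1 \<Longrightarrow>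
           \<bar>discrete_exp k w (\<lambda>i. mu i / sqrt \<delta>) (poly p) - std_gauss_exp (poly p)\<bar>
             \<le> sqrt (real m') * lam * \<delta> powr (- (real m' / 2))"
proof -
  fix p :: "real poly"
  assume "degree p \<le> m'" and unit: "std_gauss_exp (\<lambda>x. (poly p x)\<^sup>2) = 1"
  then obtain a where p: "p = hermite_sum a m'" using hermite_expansion by blast
  define r where "r = hermite_sum (\<lambda>j. a j / sqrt \<delta> ^ j) m'"
  define E where "E = std_gauss_exp (\<lambda>x. (poly r x)\<^sup>2)"
  have E: "1 \<le> E" "E \<le> 1 / \<delta> ^ m'"
    using std_gauss_exp_hermite_sum_rescale_sq[OF delta, of a m'] unit
    by (simp_all add: E_def r_def p)
  have sqrt_E: "sqrt E \<le> \<delta> powr (- (real m' / 2))"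
    using real_sqrt_le_mono[OF E(2)] delta by (simp add: sqrt_inverse_power_eq_powr)
  have deg_r: "degree r \<le> m'" unfolding r_def by (rule degree_hermite_sum)
  have pos: "0 < std_gauss_exp (\<lambda>x. (poly r x)\<^sup>2)" using E(1) unfolding E_def by linarith
  have "\<bar>discrete_exp k w (\<lambda>i. mu i / sqrt \<delta>) (poly p) - std_gauss_exp (poly p)\<bar>
      = \<bar>mixture_exp k w mu (1 - \<delta>) (poly r) - std_gauss_exp (poly r)\<bar>"
    using delta by (simp add: p r_def discrete_exp_eq_mixture_exp_hermite_sum std_gauss_exp_hermite_sum)
  also have "\<dots> \<le> lam * sqrt E"
    unfolding E_def by (rule mixture_deviation_le[OF hyp deg_r pos])
  also have "\<dots> \<le> lam * \<delta> powr (- (real m' / 2))"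
    using sqrt_E lam by (rule mult_left_mono)
  also have "\<dots> \<le> sqrt (real m') * lam * \<delta> powr (- (real m' / 2))"
    using mult_right_mono[of 1 "sqrt (real m')" "lam * \<delta> powr (- (real m' / 2))"] lam m'
    by (simp add: mult.assoc)
  finally show "\<bar>discrete_exp k w (\<lambda>i. mu i / sqrt \<delta>) (poly p) - std_gauss_exp (poly p)\<bar>
      \<le> sqrt (real m') * lam * \<delta> powr (- (real m' / 2))" .
qed

end
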